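(* Let $\lambda\geqslant 1$ be a cardinal and $n$ a positive integer. Then the semigroup $\mathscr{I}_\lambda^n$ is algebraically $h$-closed in the class of (Hausdorff) topological inverse semigroups. Explicitly: for every (Hausdorff) topological inverse semigroup $S$ and every homomorphism $h\colon \mathscr{I}_\lambda^n\to S$, the image $(\mathscr{I}_\lambda^n)h$ is a closed subset of $S$.
   Context: All topological spaces are Hausdorff. A topological (inverse) semigroup is a topological space with a continuous semigroup operation (and, for inverse semigroups, continuous inversion $a\mapsto a^{-1}$, where $a^{-1}$ is the unique element with $aa^{-1}a=a$, $a^{-1}aa^{-1}=a^{-1}$). For a set $X$ of cardinality $\lambda$, $\mathscr{I}(X)$ is the symmetric inverse semigroup of all partial one-to-one maps of $X$ (including the empty map) under composition $x(\alpha\beta)=(x\alpha)\beta$ on $\operatorname{dom}(\alpha\beta)=\{y\in\operatorname{dom}\alpha: y\alpha\in\operatorname{dom}\beta\}$; the rank of $\alpha$ is $|\operatorname{ran}\alpha|$, and $\mathscr{I}_\lambda^n=\{\alpha\in\mathscr{I}(X): \operatorname{rank}\alpha\leqslant n\}$. Given a class $\mathfrak{S}$ of topological semigroups: $S\in\mathfrak{S}$ is $H$-closed in $\mathfrak{S}$ if $S$ is closed in every $T\in\mathfrak{S}$ containing $S$ as a (topological) subsemigroup; $S\in\mathfrak{S}$ is absolutely $H$-closed in $\mathfrak{S}$ if every continuous homomorphic image of $S$ in any $T\in\mathfrak{S}$ (with the subspace topology) is $H$-closed in $\mathfrak{S}$; a semigroup $S$ is algebraically $h$-closed in $\mathfrak{S}$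 if $S$ with the discrete topology belongs to $\mathfrak{S}$ and is absolutely $H$-closed in $\mathfrak{S}$. *)

theory Defs
  imports Complex_Main
begin

text \<open>Partial one-to-one maps of the ground set (the type 'a, of cardinality lambda)
  are represented as maps 'a \<rightharpoonup> 'a which are injective on their domain.\<close>

definition partial_bijection :: "('a \<rightharpoonup> 'a) \<Rightarrow> bool" where
  "partial_bijection f \<longleftrightarrow> inj_on f (dom f)"

text \<open>Composition in the paper's (left-to-right) convention: x(\<alpha>\<beta>) = (x\<alpha>)\<beta>.\<close>
definition pcomp :: "('a \<rightharpoonup> 'a) \<Rightarrow> ('a \<rightharpoonup> 'a) \<Rightarrow> ('a \<rightharpoonup> 'a)" where
  "pcomp \<alpha> \<beta> = \<beta> \<circ>\<^sub>m \<alpha>"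

definition I_rank :: "nat \<Rightarrow> ('a \<rightharpoonup> 'a) set" where
  "I_rank n = {f. partial_bijection f \<and> finite (ran f) \<and> card (ran f) \<le> n}"

text \<open>A (Hausdorff, via the type class t2_space) topological inverse semigroup structure
  on the type 'b, given by the multiplication mult.\<close>
definition inverse_semigroup :: "('b \<Rightarrow> 'b \<Rightarrow> 'b) \<Rightarrow> bool" where
  "inverse_semigroup mult \<longleftrightarrow>
     (\<forall>a b c. mult (mult a b) c = mult a (mult b c)) \<and>
     (\<forall>a. \<exists>!b. mult (mult a b) a = a \<and> mult (mult b a) b = b)"

definition sg_inverse :: "('b \<Rightarrow> 'b \<Rightarrow> 'b) \<Rightarrow> 'b \<Rightarrow> 'b" where
  "sg_inverse mult a = (THE b. mult (mult a b) a = a \<and> mult (mult b a) b = b)"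

definition topological_inverse_semigroup :: "('b::t2_space \<Rightarrow> 'b \<Rightarrow> 'b) \<Rightarrow> bool" where
  "topological_inverse_semigroup mult \<longleftrightarrow>
     inverse_semigroup mult \<and>
     continuous_on UNIV (\<lambda>p. mult (fst p) (snd p)) \<and>
     continuous_on UNIV (sg_inverse mult)"

end

theory Submission
  imports Defs "HOL-Analysis.Analysis"
begin

(* Let I = I_rank n, let h : I -> S be a homomorphism into a Hausdorff topological
   inverse semigroup S, and let x be a point of the closure of h(I), with inverse y.

   (1) The idempotents of I are the partial identities ident_on D with |D| <= n, and
       ident_on D . ident_on E = ident_on (D \<inter> E).  Any homomorphism from this
       semilattice into a Hausdorff topological semigroup has closed image: a closure
       point is a limit along an ultrafilter, and the ultrafilter limit E of the sets
       D identifies it as h(ident_on E) (lemma closed_image_small_sets).  So z |-> h(a) z h(b) maps the closure of h(I)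
       into a finite, hence closed, subset of h(I).  Since x = (x y) x (y x), x \<in> h(I). *)

section \<open>Ultrafilters\<close>

definition ultrafilter :: "'a filter \<Rightarrow> bool" where
  "ultrafilter U \<longleftrightarrow> U \<noteq> bot \<and> (\<forall>P. eventually P U \<or> eventually (\<lambda>x. \<not> P x) U)"

lemma ultrafilterI_maximal:
  assumes proper: "U \<noteq> bot"
    and maximal: "\<And>G. G \<noteq> bot \<Longrightarrow> G \<le> U \<Longrightarrow> G = U"
  shows "ultrafilter U"
  unfolding ultrafilter_def
proof (intro conjI allI proper)
  fix P
  show "eventually P U \<or> eventually (\<lambda>x. \<not> P x) U"
  proof (rule disjCI)
    assume "\<not> eventually (\<lambda>x. \<not> P x) U"
    then have "inf U (principal {x. P x}) \<noteq> bot"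
      by (simp add: trivial_limit_def eventually_inf_principal)
    then have refined: "inf U (principal {x. P x}) = U"
      by (rule maximal) simp
    have "eventually P (inf U (principal {x. P x}))"
      by (simp add: eventually_inf_principal)
    then show "eventually P U" by (simp only: refined)
  qed
qed

text \<open>Every proper filter is refined by an ultrafilter: a maximal element, for
  refinement, among the proper filters below it exists by Zorn's lemma, since the
  infimum of a nonempty chain of proper filters is proper.\<close>
lemma ultrafilter_exists:
  fixes F :: "'a filter"
  assumes "F \<noteq> bot"
  shows "\<exists>U\<le>F. ultrafilter U"
proof -
  define A where "A = {G. G \<noteq> bot \<and> G \<le> F}"
  define finer :: "'a filter \<Rightarrow> 'a filter \<Rightarrow> bool" where "finer G G' \<longleftrightarrow> G' \<le> G" for G G'
  have po: "partial_order_on A (relation_of finer A)"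
    by (auto simp: finer_def partial_order_on_def preorder_on_def relation_of_def
        refl_on_def trans_def antisym_def)
  have "\<exists>u\<in>A. \<forall>G\<in>C. finer G u" if C: "C \<in> Chains (relation_of finer A)" for C
  proof (cases "C = {}")
    case True
    then show ?thesis using assms by (auto simp: A_def)
  next
    case False
    have members: "G \<in> A" if "G \<in> C" for G
      using C that by (auto simp: Chains_def relation_of_def)
    have directed: "\<exists>K\<in>C. K \<le> inf G G'" if "G \<in> C" "G' \<in> C" for G G'
      using C that by (auto simp: Chains_def relation_of_def finer_def inf_absorb1 inf_absorb2)
    have "\<not> eventually (\<lambda>_. False) (Inf C)"
      using members by (auto simp: eventually_Inf_base[OF False directed] A_def trivial_limit_def)
    moreover obtain G0 where "G0 \<in> C" using False by blast
    ultimately have "Inf C \<in> A"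
      using members Inf_lower2[OF \<open>G0 \<in> C\<close>] by (auto simp: A_def trivial_limit_def)
    then show ?thesis
      unfolding finer_def by (auto intro: Inf_lower)
  qed
  then obtain U where "U \<in> A" and maximal: "\<And>G. G \<in> A \<Longrightarrow> finer U G \<Longrightarrow> G = U"
    using predicate_Zorn[OF po] by blast
  then have "ultrafilter U"
    by (intro ultrafilterI_maximal) (auto simp: A_def finer_def intro: order_trans)
  with \<open>U \<in> A\<close> show ?thesis by (auto simp: A_def)
qed

lemma closure_image_ultrafilter:
  assumes "x \<in> closure (f ` A)"
  obtains U where "ultrafilter U" "eventually (\<lambda>a. a \<in> A) U" "(f \<longlongrightarrow> x) U"
proof -
  define F where "F = inf (filtercomap f (nhds x)) (principal A)"
  have "F \<noteq> bot"
  proof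
    assume "F = bot"
    then obtain P where "eventually P (nhds x)" and P: "\<And>a. P (f a) \<Longrightarrow> a \<notin> A"
      unfolding F_def trivial_limit_def eventually_inf_principal eventually_filtercomap by auto
    then obtain S where "open S" "x \<in> S" and S: "\<And>y. y \<in> S \<Longrightarrow> P y"
      unfolding eventually_nhds by blast
    with assms have "f ` A \<inter> S \<noteq> {}"
      unfolding closure_iff_nhds_not_empty by blast
    then obtain a where "a \<in> A" "f a \<in> S" by blast
    with S P show False by blast
  qed
  then obtain U where "U \<le> F" "ultrafilter U"
    using ultrafilter_exists by blast
  moreover have "eventually (\<lambda>a. a \<in> A) U"
    using \<open>U \<le> F\<close> by (simp add: F_def le_principal)
  moreover have "(f \<longlongrightarrow> x) U"
  proof -
    have "filtermap f U \<le> filtermap f (filtercomap f (nhds x))"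
      using \<open>U \<le> F\<close> unfolding F_def by (intro filtermap_mono) (auto intro: order_trans)
    also have "\<dots> \<le> nhds x" by (rule filtermap_filtercomap)
    finally show ?thesis unfolding filterlim_def .
  qed
  ultimately show ?thesis using that by blast
qed

definition limit_set :: "'i filter \<Rightarrow> ('i \<Rightarrow> 'a set) \<Rightarrow> 'a set" where
  "limit_set U D = {a. eventually (\<lambda>i. a \<in> D i) U}"

lemma limit_set_trace:
  assumes U: "ultrafilter U" and "finite F"
  shows "eventually (\<lambda>i. D i \<inter> F = limit_set U D \<inter> F) U"
proof -
  have "eventually (\<lambda>i. a \<in> D i \<longleftrightarrow> a \<in> limit_set U D) U" for a
  proof (cases "a \<in> limit_set U D")
    case False
    with U have "eventually (\<lambda>i. a \<notin> D i) U"
      unfolding ultrafilter_def limit_set_def by blast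
    with False show ?thesis by simp
  qed (simp add: limit_set_def)
  then have "eventually (\<lambda>i. \<forall>a\<in>F. a \<in> D i \<longleftrightarrow> a \<in> limit_set U D) U"
    using \<open>finite F\<close> by (simp add: eventually_ball_finite)
  then show ?thesis by (rule eventually_mono) blast
qed

text \<open>If eventually |D i| \<le> n, then the limit set has at most n elements: any finite
  subset of it is eventually contained in some D i.\<close>
lemma limit_set_card:
  assumes U: "ultrafilter U" and small: "eventually (\<lambda>i. finite (D i) \<and> card (D i) \<le> n) U"
  shows "finite (limit_set U D) \<and> card (limit_set U D) \<le> n"
proof -
  have bound: "card F \<le> n" if "finite F" "F \<subseteq> limit_set U D" for F
  proof -
    have "eventually (\<lambda>i. D i \<inter> F = limit_set U D \<inter> F \<and> finite (D i) \<and> card (D i) \<le> n) U"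
      using limit_set_trace[OF U \<open>finite F\<close>] small by (rule eventually_conj)
    then obtain i where "D i \<inter> F = limit_set U D \<inter> F" "finite (D i)" "card (D i) \<le> n"
      using U eventually_happens' unfolding ultrafilter_def by blast
    with that(2) show ?thesis by (metis card_mono inf.absorb_iff2 inf_le1 le_trans)
  qed
  have "finite (limit_set U D)"
  proof (rule ccontr)
    assume "infinite (limit_set U D)"
    then obtain F where "finite F" "card F = Suc n" "F \<subseteq> limit_set U D"
      using infinite_arbitrarily_large by blast
    with bound show False by fastforce
  qed
  with bound show ?thesis by blast
qed

section \<open>Topological semigroups\<close>

lemma tendsto_semigroup_mult:
  fixes mult :: "'b::topological_space \<Rightarrow> 'b \<Rightarrow> 'b"
  assumes "continuous_on UNIV (\<lambda>p. mult (fst p) (snd p))"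
    and "(f \<longlongrightarrow> a) F" "(g \<longlongrightarrow> b) F"
  shows "((\<lambda>i. mult (f i) (g i)) \<longlongrightarrow> mult a b) F"
  using continuous_on_tendsto_compose[OF assms(1) tendsto_Pair[OF assms(2,3)]] by simp

lemma continuous_on_semigroup_mult:
  fixes mult :: "'b::topological_space \<Rightarrow> 'b \<Rightarrow> 'b"
  assumes "continuous_on UNIV (\<lambda>p. mult (fst p) (snd p))"
    and "continuous_on UNIV f" "continuous_on UNIV g"
  shows "continuous_on UNIV (\<lambda>z. mult (f z) (g z))"
  using continuous_on_compose2[OF assms(1) continuous_on_Pair[OF assms(2,3)]] by simp

lemma tendsto_eventually_const_eq:
  fixes f :: "'i \<Rightarrow> 'b::t2_space"
  assumes "F \<noteq> bot" "(f \<longlongrightarrow> a) F" "eventually (\<lambda>i. f i = c) F"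
  shows "a = c"
  using tendsto_unique[OF assms(1,2) tendsto_eventually[OF assms(3)]] .

lemma continuous_map_closure_image:
  assumes "continuous_on UNIV f" "closed T" "\<And>a. a \<in> A \<Longrightarrow> f (h a) \<in> T"
    and "x \<in> closure (h ` A)"
  shows "f x \<in> T"
proof -
  have "f ` closure (h ` A) \<subseteq> T"
    using assms(3) by (intro image_closure_subset[OF continuous_on_subset[OF assms(1)] assms(2)]) auto
  with assms(4) show ?thesis by blast
qed

text \<open>A
  closure point g is the limit of h(D) along an ultrafilter; with E the limit set,
  g h(F) = h(E \<inter> F) for all small F, hence g g = h(E), while g g = g by continuity.\<close>
lemma closed_image_small_sets:
  fixes mult :: "'b::t2_space \<Rightarrow> 'b \<Rightarrow> 'b" and h :: "'a set \<Rightarrow> 'b"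
  assumes cont: "continuous_on UNIV (\<lambda>p. mult (fst p) (snd p))"
    and hom: "\<And>D E. D \<in> {D. finite D \<and> card D \<le> n} \<Longrightarrow> E \<in> {D. finite D \<and> card D \<le> n} \<Longrightarrow>
                h (D \<inter> E) = mult (h D) (h E)"
  shows "closed (h ` {D. finite D \<and> card D \<le> n})"
  unfolding closure_subset_eq[symmetric]
proof
  let ?Small = "{D :: 'a set. finite D \<and> card D \<le> n}"
  fix g assume "g \<in> closure (h ` ?Small)"
  then obtain U where U: "ultrafilter U" and small: "eventually (\<lambda>D. D \<in> ?Small) U"
    and lim: "(h \<longlongrightarrow> g) U"
    by (rule closure_image_ultrafilter)
  have proper: "U \<noteq> bot" using U by (simp add: ultrafilter_def)
  define E where "E = limit_set U id"
  have E: "E \<in> ?Small"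
    using limit_set_card[OF U, of id] small by (simp add: E_def)
  have trace: "eventually (\<lambda>D. D \<inter> F = E \<inter> F \<and> D \<in> ?Small) U" if "finite F" for F
  proof -
    have "eventually (\<lambda>D. D \<inter> F = E \<inter> F) U"
      using limit_set_trace[OF U that, of id] by (simp add: E_def)
    then show ?thesis using small by (rule eventually_conj)
  qed
  have right_mult: "mult g (h F) = h (E \<inter> F)" if F: "F \<in> ?Small" for F
  proof (rule tendsto_eventually_const_eq[OF proper tendsto_semigroup_mult[OF cont lim tendsto_const]])
    have "eventually (\<lambda>D. D \<inter> F = E \<inter> F \<and> D \<in> ?Small) U"
      using F by (intro trace) simp
    then show "eventually (\<lambda>D. mult (h D) (h F) = h (E \<inter> F)) U"
    proof (rule eventually_mono)
      fix D assume "D \<inter> F = E \<inter> F \<and> D \<in> ?Small"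
      then show "mult (h D) (h F) = h (E \<inter> F)" using hom[of D F] F by simp
    qed
  qed
  have square: "mult g g = h E"
  proof (rule tendsto_eventually_const_eq[OF proper tendsto_semigroup_mult[OF cont tendsto_const lim]])
    have "eventually (\<lambda>D. D \<inter> E = E \<inter> E \<and> D \<in> ?Small) U"
      using E by (intro trace) simp
    then show "eventually (\<lambda>D. mult g (h D) = h E) U"
    proof (rule eventually_mono)
      fix D assume D: "D \<inter> E = E \<inter> E \<and> D \<in> ?Small"
      then have "E \<inter> D = E" by blast
      with D show "mult g (h D) = h E" using right_mult[of D] by simp
    qed
  qed
  have idempotent: "mult g g = g"
  proof (rule tendsto_unique[OF proper tendsto_semigroup_mult[OF cont lim lim]])
    have "eventually (\<lambda>D. h D = mult (h D) (h D)) U"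
      using small by (rule eventually_mono) (simp add: hom[symmetric])
    with lim show "((\<lambda>D. mult (h D) (h D)) \<longlongrightarrow> g) U"
      by (rule tendsto_cong[THEN iffD1, rotated])
  qed
  from idempotent[symmetric] square have "g = h E" by (rule trans)
  with E show "g \<in> h ` ?Small" by (rule rev_image_eqI)
qed

section \<open>Partial bijections\<close>

text \<open>The partial identity on D; these are exactly the idempotents of the symmetric
  inverse semigroup.\<close>
definition ident_on :: "'a set \<Rightarrow> ('a \<rightharpoonup> 'a)" where
  "ident_on D = (\<lambda>a. if a \<in> D then Some a else None)"

definition pinverse :: "('a \<rightharpoonup> 'a) \<Rightarrow> ('a \<rightharpoonup> 'a)" where
  "pinverse \<alpha> = (\<lambda>b. if b \<in> ran \<alpha> then Some (THE a. \<alpha> a = Some b) else None)"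

lemma dom_ident_on [simp]: "dom (ident_on D) = D"
  and ran_ident_on [simp]: "ran (ident_on D) = D"
  by (auto simp: ident_on_def dom_def ran_def split: if_splits)

lemma pcomp_ident_on: "pcomp (ident_on D) (ident_on E) = ident_on (D \<inter> E)"
  by (auto simp: pcomp_def ident_on_def map_comp_def fun_eq_iff)

lemma ident_on_in_I_rank: "ident_on D \<in> I_rank n \<longleftrightarrow> finite D \<and> card D \<le> n"
proof -
  have "partial_bijection (ident_on D)"
    by (auto simp: partial_bijection_def inj_on_def ident_on_def split: if_splits)
  then show ?thesis by (simp add: I_rank_def)
qed

lemma dom_pcomp_subset: "dom (pcomp \<alpha> \<beta>) \<subseteq> dom \<alpha>"
  by (auto simp: pcomp_def map_comp_def dom_def split: option.splits)

lemma ran_pcomp_subset: "ran (pcomp \<alpha> \<beta>) \<subseteq> ran \<beta>"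
  by (auto simp: pcomp_def map_comp_def ran_def split: option.splits)

text \<open>I_rank n is a subsemigroup: the rank of a product is bounded by the rank of its
  right factor.\<close>
lemma pcomp_in_I_rank:
  assumes "\<alpha> \<in> I_rank n" "\<beta> \<in> I_rank n"
  shows "pcomp \<alpha> \<beta> \<in> I_rank n"
proof -
  have "finite (ran \<beta>)" "card (ran \<beta>) \<le> n" using assms by (auto simp: I_rank_def)
  then have "finite (ran (pcomp \<alpha> \<beta>))" "card (ran (pcomp \<alpha> \<beta>)) \<le> n"
    using ran_pcomp_subset[of \<alpha> \<beta>] by (auto intro: finite_subset dest: card_mono)
  moreover have "partial_bijection (pcomp \<alpha> \<beta>)"
    using assms unfolding I_rank_def partial_bijection_def inj_on_def pcomp_def map_comp_def
    by (auto split: option.splits) (metis domI option.inject)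
  ultimately show ?thesis by (simp add: I_rank_def)
qed

lemma partial_bijection_the:
  assumes "partial_bijection \<alpha>" "\<alpha> a = Some b"
  shows "(THE a'. \<alpha> a' = Some b) = a"
proof (rule the_equality)
  fix a' assume "\<alpha> a' = Some b"
  with assms show "a' = a"
    unfolding partial_bijection_def by (metis domI inj_onD)
qed (rule assms(2))

lemma pinverse_eq_Some_iff:
  assumes "partial_bijection \<alpha>"
  shows "pinverse \<alpha> b = Some a \<longleftrightarrow> \<alpha> a = Some b"
proof
  assume "\<alpha> a = Some b"
  then show "pinverse \<alpha> b = Some a"
    using partial_bijection_the[OF assms] by (auto simp: pinverse_def ran_def)
next
  assume inv: "pinverse \<alpha> b = Some a"
  then obtain a' where a': "\<alpha> a' = Some b" by (auto simp: pinverse_def ran_def split: if_splits)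
  then have "pinverse \<alpha> b = Some a'"
    using partial_bijection_the[OF assms a'] by (auto simp: pinverse_def ran_def)
  with inv a' show "\<alpha> a = Some b" by simp
qed

lemma pinverse_eq_None_iff: "pinverse \<alpha> b = None \<longleftrightarrow> b \<notin> ran \<alpha>"
  by (simp add: pinverse_def)

lemma pcomp_pinverse_right:
  assumes "partial_bijection \<alpha>"
  shows "pcomp \<alpha> (pinverse \<alpha>) = ident_on (dom \<alpha>)"
  using pinverse_eq_Some_iff[OF assms]
  by (auto simp: fun_eq_iff pcomp_def map_comp_def ident_on_def split: option.splits)

lemma pcomp_pinverse_left:
  assumes "partial_bijection \<alpha>"
  shows "pcomp (pinverse \<alpha>) \<alpha> = ident_on (ran \<alpha>)"
proof -
  have "(case pinverse \<alpha> b of None \<Rightarrow> None | Some a \<Rightarrow> \<alpha> a) = ident_on (ran \<alpha>) b" for b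
    using pinverse_eq_Some_iff[OF assms, of b] pinverse_eq_None_iff[of \<alpha> b]
    by (cases "pinverse \<alpha> b") (auto simp: ident_on_def ran_def)
  then show ?thesis by (simp add: fun_eq_iff pcomp_def map_comp_def)
qed

lemma pcomp_ident_on_dom: "pcomp (ident_on (dom \<alpha>)) \<alpha> = \<alpha>"
  by (auto simp: fun_eq_iff pcomp_def map_comp_def ident_on_def dom_def)

lemma pcomp_ident_on_ran_pinverse: "pcomp (ident_on (ran \<alpha>)) (pinverse \<alpha>) = pinverse \<alpha>"
  by (auto simp: fun_eq_iff pcomp_def map_comp_def ident_on_def pinverse_def)

text \<open>A partial bijection maps its domain bijectively onto its range, so elements of
  I_rank n also have finite domains of size at most n.\<close>
lemma I_rank_dom:
  assumes "\<alpha> \<in> I_rank n"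
  shows "finite (dom \<alpha>) \<and> card (dom \<alpha>) \<le> n"
proof -
  have "bij_betw (\<lambda>a. the (\<alpha> a)) (dom \<alpha>) (ran \<alpha>)"
    using assms unfolding I_rank_def partial_bijection_def bij_betw_def inj_on_def
    by (force simp: ran_def dom_def)
  with assms show ?thesis
    by (auto simp: I_rank_def bij_betw_finite bij_betw_same_card)
qed

lemma I_rank_ident_on:
  assumes "\<alpha> \<in> I_rank n"
  shows "ident_on (dom \<alpha>) \<in> I_rank n \<and> ident_on (ran \<alpha>) \<in> I_rank n"
proof -
  have "finite (ran \<alpha>) \<and> card (ran \<alpha>) \<le> n" using assms by (simp add: I_rank_def)
  with I_rank_dom[OF assms] show ?thesis by (simp add: ident_on_in_I_rank)
qed

lemma ran_pinverse:
  assumes "partial_bijection \<alpha>"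
  shows "ran (pinverse \<alpha>) = dom \<alpha>"
  using pinverse_eq_Some_iff[OF assms] by (auto simp: ran_def dom_def)

lemma pinverse_in_I_rank:
  assumes "\<alpha> \<in> I_rank n"
  shows "pinverse \<alpha> \<in> I_rank n"
proof -
  have pb: "partial_bijection \<alpha>" using assms by (simp add: I_rank_def)
  have "partial_bijection (pinverse \<alpha>)"
    unfolding partial_bijection_def
  proof (rule inj_onI)
    fix b b' assume "b \<in> dom (pinverse \<alpha>)" and eq: "pinverse \<alpha> b = pinverse \<alpha> b'"
    then obtain a where a: "pinverse \<alpha> b = Some a" by blast
    moreover from a eq have "pinverse \<alpha> b' = Some a" by simp
    ultimately have "\<alpha> a = Some b" "\<alpha> a = Some b'"
      using pinverse_eq_Some_iff[OF pb] by blast+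
    then show "b = b'" by simp
  qed
  with I_rank_dom[OF assms] show ?thesis
    by (simp add: I_rank_def ran_pinverse[OF pb])
qed

lemma finite_maps_within:
  assumes "finite A" "finite B"
  shows "finite {m :: 'a \<rightharpoonup> 'b. dom m \<subseteq> A \<and> ran m \<subseteq> B}"
proof -
  have "{m :: 'a \<rightharpoonup> 'b. dom m \<subseteq> A \<and> ran m \<subseteq> B} = (\<Union>C\<in>Pow A. {m. dom m = C \<and> ran m \<subseteq> B})"
    by auto
  moreover have "finite {m :: 'a \<rightharpoonup> 'b. dom m = C \<and> ran m \<subseteq> B}" if "C \<in> Pow A" for C
    using that assms by (intro finite_set_of_finite_maps) (auto intro: finite_subset)
  ultimately show ?thesis using assms(1) by simp
qed

text \<open>Two-sided multiples a \<alpha> b with a, b fixed have domain in dom a and range in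
  ran b, hence there are only finitely many of them.\<close>
lemma finite_two_sided_multiples:
  assumes "finite (dom a)" "finite (ran b)"
  shows "finite (range (\<lambda>\<alpha>. pcomp (pcomp a \<alpha>) b))"
proof (rule finite_subset)
  have "pcomp (pcomp a \<alpha>) b \<in> {m. dom m \<subseteq> dom a \<and> ran m \<subseteq> ran b}" for \<alpha>
  proof -
    have "dom (pcomp (pcomp a \<alpha>) b) \<subseteq> dom a"
      using dom_pcomp_subset[of "pcomp a \<alpha>" b] dom_pcomp_subset[of a \<alpha>] by (rule subset_trans)
    moreover have "ran (pcomp (pcomp a \<alpha>) b) \<subseteq> ran b" by (rule ran_pcomp_subset)
    ultimately show ?thesis by simp
  qed
  then show "range (\<lambda>\<alpha>. pcomp (pcomp a \<alpha>) b) \<subseteq> {m. dom m \<subseteq> dom a \<and> ran m \<subseteq> ran b}"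
    by (rule image_subsetI)
qed (rule finite_maps_within[OF assms])

section \<open>Homomorphisms from I_rank n into topological inverse semigroups\<close>

lemma sg_inverse_law:
  fixes mult :: "'b \<Rightarrow> 'b \<Rightarrow> 'b"
  assumes "inverse_semigroup mult"
  shows "mult (mult a (sg_inverse mult a)) a = a"
proof -
  have "\<exists>!b. mult (mult a b) a = a \<and> mult (mult b a) b = b"
    using assms unfolding inverse_semigroup_def by blast
  from theI'[OF this] show ?thesis by (simp add: sg_inverse_def)
qed

lemma sg_inverse_eqI:
  fixes mult :: "'b \<Rightarrow> 'b \<Rightarrow> 'b"
  assumes "inverse_semigroup mult" "mult (mult a b) a = a" "mult (mult b a) b = b"
  shows "sg_inverse mult a = b"
proof -
  have "\<exists>!b. mult (mult a b) a = a \<and> mult (mult b a) b = b"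
    using assms(1) unfolding inverse_semigroup_def by blast
  with assms(2,3) show ?thesis
    unfolding sg_inverse_def by (blast intro: the1_equality)
qed

text \<open>A homomorphism into an inverse semigroup preserves inverses, because the
  inverse is unique.\<close>
lemma hom_pinverse:
  fixes mult :: "'b \<Rightarrow> 'b \<Rightarrow> 'b"
  assumes isg: "inverse_semigroup mult"
    and hom: "\<forall>\<alpha>\<in>I_rank n. \<forall>\<beta>\<in>I_rank n. h (pcomp \<alpha> \<beta>) = mult (h \<alpha>) (h \<beta>)"
    and \<alpha>: "\<alpha> \<in> I_rank n"
  shows "h (pinverse \<alpha>) = sg_inverse mult (h \<alpha>)"
proof (rule sg_inverse_eqI[OF isg, symmetric])
  have pb: "partial_bijection \<alpha>" using \<alpha> by (simp add: I_rank_def)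
  have inv: "pinverse \<alpha> \<in> I_rank n" using \<alpha> by (rule pinverse_in_I_rank)
  have dom: "ident_on (dom \<alpha>) \<in> I_rank n" and ran: "ident_on (ran \<alpha>) \<in> I_rank n"
    using I_rank_ident_on[OF \<alpha>] by simp_all
  have H: "\<And>\<beta> \<gamma>. \<beta> \<in> I_rank n \<Longrightarrow> \<gamma> \<in> I_rank n \<Longrightarrow> mult (h \<beta>) (h \<gamma>) = h (pcomp \<beta> \<gamma>)"
    using hom by simp
  show "mult (mult (h \<alpha>) (h (pinverse \<alpha>))) (h \<alpha>) = h \<alpha>"
    using \<alpha> inv dom by (simp add: H pcomp_pinverse_right[OF pb] pcomp_ident_on_dom)
  show "mult (mult (h (pinverse \<alpha>)) (h \<alpha>)) (h (pinverse \<alpha>)) = h (pinverse \<alpha>)"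
    using \<alpha> inv ran by (simp add: H pcomp_pinverse_left[OF pb] pcomp_ident_on_ran_pinverse)
qed

text \<open>Step (2): for x in the closure of h(I_rank n), both x x\<inverse> and x\<inverse> x lie in
  the closed image of the idempotents, since z \<mapsto> z z\<inverse> and z \<mapsto> z\<inverse> z are continuous and
  send h(\<alpha>) to h(ident_on (dom \<alpha>)) and h(ident_on (ran \<alpha>)).\<close>
lemma closure_image_inverse_products:
  fixes mult :: "'b::t2_space \<Rightarrow> 'b \<Rightarrow> 'b" and h :: "('a \<rightharpoonup> 'a) \<Rightarrow> 'b"
  assumes tis: "topological_inverse_semigroup mult"
    and hom: "\<forall>\<alpha>\<in>I_rank n. \<forall>\<beta>\<in>I_rank n. h (pcomp \<alpha> \<beta>) = mult (h \<alpha>) (h \<beta>)"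
    and x: "x \<in> closure (h ` I_rank n)"
  shows "mult x (sg_inverse mult x) \<in> h ` I_rank n \<and> mult (sg_inverse mult x) x \<in> h ` I_rank n"
proof -
  have isg: "inverse_semigroup mult"
    and cont: "continuous_on UNIV (\<lambda>p. mult (fst p) (snd p))"
    and cont_inv: "continuous_on UNIV (sg_inverse mult)"
    using tis by (auto simp: topological_inverse_semigroup_def)
  let ?Small = "{D :: 'a set. finite D \<and> card D \<le> n}"
  let ?Idem = "(\<lambda>D. h (ident_on D)) ` ?Small"
  have "closed ?Idem"
  proof (rule closed_image_small_sets[OF cont])
    fix D E assume "D \<in> ?Small" "E \<in> ?Small"
    then have "h (pcomp (ident_on D) (ident_on E)) = mult (h (ident_on D)) (h (ident_on E))"
      using hom by (simp add: ident_on_in_I_rank)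
    then show "h (ident_on (D \<inter> E)) = mult (h (ident_on D)) (h (ident_on E))"
      by (simp only: pcomp_ident_on)
  qed
  have Idem_sub: "?Idem \<subseteq> h ` I_rank n"
    by (auto simp: ident_on_in_I_rank)
  have into_Idem: "mult (h \<alpha>) (sg_inverse mult (h \<alpha>)) \<in> ?Idem \<and> mult (sg_inverse mult (h \<alpha>)) (h \<alpha>) \<in> ?Idem"
    if \<alpha>: "\<alpha> \<in> I_rank n" for \<alpha>
  proof -
    have pb: "partial_bijection \<alpha>" using \<alpha> by (simp add: I_rank_def)
    have inv: "pinverse \<alpha> \<in> I_rank n" using \<alpha> by (rule pinverse_in_I_rank)
    have "mult (h \<alpha>) (sg_inverse mult (h \<alpha>)) = h (pcomp \<alpha> (pinverse \<alpha>))"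
      using hom \<alpha> inv by (simp add: hom_pinverse[OF isg hom \<alpha>, symmetric])
    moreover have "mult (sg_inverse mult (h \<alpha>)) (h \<alpha>) = h (pcomp (pinverse \<alpha>) \<alpha>)"
      using hom \<alpha> inv by (simp add: hom_pinverse[OF isg hom \<alpha>, symmetric])
    ultimately show ?thesis
      using I_rank_ident_on[OF \<alpha>]
      by (simp add: pcomp_pinverse_right[OF pb] pcomp_pinverse_left[OF pb] ident_on_in_I_rank)
  qed
  have "mult x (sg_inverse mult x) \<in> ?Idem"
    using continuous_on_semigroup_mult[OF cont continuous_on_id cont_inv] \<open>closed ?Idem\<close> _ x
    by (rule continuous_map_closure_image) (use into_Idem in blast)
  moreover have "mult (sg_inverse mult x) x \<in> ?Idem"
    using continuous_on_semigroup_mult[OF cont cont_inv continuous_on_id] \<open>closed ?Idem\<close> _ x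
    by (rule continuous_map_closure_image) (use into_Idem in blast)
  ultimately show ?thesis using Idem_sub by blast
qed

text \<open>Step (3): multiplying a point of the closure of h(I_rank n) on both sides by
  elements of h(I_rank n) lands in h(I_rank n), because the continuous map
  z \<mapsto> h(a) z h(b) sends h(I_rank n) into the finite, hence closed, set h(a I_rank n b).\<close>
lemma closure_image_two_sided:
  fixes mult :: "'b::t2_space \<Rightarrow> 'b \<Rightarrow> 'b" and h :: "('a \<rightharpoonup> 'a) \<Rightarrow> 'b"
  assumes cont: "continuous_on UNIV (\<lambda>p. mult (fst p) (snd p))"
    and hom: "\<forall>\<alpha>\<in>I_rank n. \<forall>\<beta>\<in>I_rank n. h (pcomp \<alpha> \<beta>) = mult (h \<alpha>) (h \<beta>)"
    and a: "a \<in> I_rank n" and b: "b \<in> I_rank n"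
    and x: "x \<in> closure (h ` I_rank n)"
  shows "mult (mult (h a) x) (h b) \<in> h ` I_rank n"
proof -
  let ?mults = "(\<lambda>\<alpha>. pcomp (pcomp a \<alpha>) b) ` I_rank n"
  have "finite (dom a)" "finite (ran b)"
    using I_rank_dom[OF a] b by (simp_all add: I_rank_def)
  then have "finite (range (\<lambda>\<alpha>. pcomp (pcomp a \<alpha>) b))"
    by (rule finite_two_sided_multiples)
  then have "finite ?mults"
    by (rule finite_subset[rotated]) (rule image_mono, simp)
  then have closed: "closed (h ` ?mults)"
    by (rule finite_imp_closed[OF finite_imageI])
  have "continuous_on UNIV (\<lambda>z. mult (mult (h a) z) (h b))"
    using continuous_on_semigroup_mult[OF cont
        continuous_on_semigroup_mult[OF cont continuous_on_const continuous_on_id] continuous_on_const] .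
  moreover have "mult (mult (h a) (h \<alpha>)) (h b) \<in> h ` ?mults" if \<alpha>: "\<alpha> \<in> I_rank n" for \<alpha>
  proof -
    have "mult (mult (h a) (h \<alpha>)) (h b) = h (pcomp (pcomp a \<alpha>) b)"
      using hom a b \<alpha> pcomp_in_I_rank[OF a \<alpha>] by simp
    then show ?thesis unfolding image_image by (rule rev_image_eqI[OF \<alpha>])
  qed
  ultimately have "mult (mult (h a) x) (h b) \<in> h ` ?mults"
    by (rule continuous_map_closure_image[OF _ closed _ x])
  moreover have "h ` ?mults \<subseteq> h ` I_rank n"
    using pcomp_in_I_rank[OF pcomp_in_I_rank[OF a] b] by (intro image_mono image_subsetI)
  ultimately show ?thesis by blast
qed

theorem theorem1:
  fixes n :: nat
    and mult :: "'b::t2_space \<Rightarrow> 'b \<Rightarrow> 'b"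
    and h :: "('a \<rightharpoonup> 'a) \<Rightarrow> 'b"
  assumes "n \<ge> 1"
    and "topological_inverse_semigroup mult"
    and "\<forall>\<alpha>\<in>I_rank n. \<forall>\<beta>\<in>I_rank n. h (pcomp \<alpha> \<beta>) = mult (h \<alpha>) (h \<beta>)"
  shows "closed (h ` I_rank n)"
  unfolding closure_subset_eq[symmetric]
proof
  fix x assume x: "x \<in> closure (h ` I_rank n)"
  have isg: "inverse_semigroup mult"
    and cont: "continuous_on UNIV (\<lambda>p. mult (fst p) (snd p))"
    using assms(2) by (auto simp: topological_inverse_semigroup_def)
  define y where "y = sg_inverse mult x"
  obtain a b where a: "a \<in> I_rank n" "mult x y = h a" and b: "b \<in> I_rank n" "mult y x = h b"
    using closure_image_inverse_products[OF assms(2,3) x] unfolding y_def by blast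
  have "x = mult (mult (mult x y) x) (mult y x)"
    using sg_inverse_law[OF isg, of x] isg by (simp add: y_def inverse_semigroup_def)
  also have "\<dots> = mult (mult (h a) x) (h b)" using a b by simp
  also have "\<dots> \<in> h ` I_rank n"
    using closure_image_two_sided[OF cont assms(3) a(1) b(1) x] .
  finally show "x \<in> h ` I_rank n" .
qed

end
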